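(* For every integer $m\geq 3$, the edge set of $C_m[4]$ can be partitioned into two $C_4$-factors and two $C_m$-factors.
   Context: For a graph $G$ and a positive integer $k$, $G[k]$ is the graph with vertex set $V(G)\times\{0,1,\dots,k-1\}$ in which $(u,i)$ and $(w,j)$ are adjacent if and only if $uw\in E(G)$. $C_m$ is the cycle of length $m$. A $C_k$-factor of a graph is a spanning subgraph each of whose components is a cycle of length $k$. *)

theory Defs
  imports Main
begin

text \<open>Simple graphs are given by a vertex set V and an edge set E of 2-element sets.\<close>

definition cycle_graph_vertices :: "nat \<Rightarrow> nat set" where
  "cycle_graph_vertices m = {0..<m}"

definition cycle_graph_edges :: "nat \<Rightarrow> nat set set" where
  "cycle_graph_edges m = {{i, (i + 1) mod m} | i. i < m}"

definition lex_vertices :: "'a set \<Rightarrow> nat \<Rightarrow> ('a \<times> nat) set" where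
  "lex_vertices V k = V \<times> {0..<k}"

definition lex_edges :: "'a set set \<Rightarrow> nat \<Rightarrow> ('a \<times> nat) set set" where
  "lex_edges E k = {{(u, i), (w, j)} | u w i j. {u, w} \<in> E \<and> i < k \<and> j < k}"

definition list_cycle_edges :: "'a list \<Rightarrow> 'a set set" where
  "list_cycle_edges xs = {{xs ! i, xs ! ((i + 1) mod length xs)} | i. i < length xs}"

definition is_Ck_factor :: "nat \<Rightarrow> 'a set \<Rightarrow> 'a set set \<Rightarrow> 'a set set \<Rightarrow> bool" where
  "is_Ck_factor k V E F \<longleftrightarrow> 3 \<le> k \<and> F \<subseteq> E \<and>
     (\<exists>Cs :: 'a list set.
        (\<forall>c\<in>Cs. length c = k \<and> distinct c) \<and>
        (\<forall>c\<in>Cs. \<forall>d\<in>Cs. c \<noteq> d \<longrightarrow> set c \<inter> set d = {}) \<and>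
        (\<Union>c\<in>Cs. set c) = V \<and>
        F = (\<Union>c\<in>Cs. list_cycle_edges c))"

end

theory Submission
  imports Defs
begin

text \<open>Colour the edge between copy a of vertex t and copy b of vertex t + 1 of C_m[4] by the
  entry (a, b) of a 4 x 4 table. In the standard table colours 0 and 1 form the complete
  bipartite graphs {0, 3} x {1, 2} and {1, 2} x {0, 3}, i.e. 4-cycles, while colours 2 and 3 are
  perfect matchings given by involutions \<sigma>; following colour 2 or 3 once around C_m composes these
  matchings to \<sigma>^m, which is the identity when m is even, so every colour class is a factor.
  For odd m the tables of the last two layer gaps are changed: the matchings there are chosen
  so that the composite around the cycle is again the identity, and the 4-cycles of colours 0
  and 1 across these two gaps are replaced by 4-cycles through two copies of the last vertex.\<close>

section \<open>Edges of C_m[n]\<close>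

definition lex_cycle_edge :: "nat \<Rightarrow> nat \<Rightarrow> nat \<Rightarrow> nat \<Rightarrow> (nat \<times> nat) set" where
  "lex_cycle_edge m t a b = {(t, a), (Suc t mod m, b)}"

lemma Suc_mod_inj:
  assumes "u < m" "v < m" "Suc u mod m = Suc v mod m"
  shows "u = v"
  using assms by (simp add: mod_Suc split: if_splits)

lemma Suc_mod_surj:
  assumes "w < m"
  obtains u where "u < m" "Suc u mod m = w"
proof (cases w)
  case 0
  with assms show ?thesis
    using that[of "m - 1"] by simp
next
  case (Suc v)
  with assms show ?thesis
    using that[of v] by simp
qed

lemma lex_cycle_edge_eq_iff:
  assumes "3 \<le> m" "t < m" "t' < m"
  shows "lex_cycle_edge m t a b = lex_cycle_edge m t' a' b' \<longleftrightarrow> t = t' \<and> a = a' \<and> b = b'"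
proof
  assume "lex_cycle_edge m t a b = lex_cycle_edge m t' a' b'"
  then have "(t = t' \<and> a = a' \<and> b = b') \<or> (t = Suc t' mod m \<and> t' = Suc t mod m)"
    unfolding lex_cycle_edge_def by (auto simp: doubleton_eq_iff)
  moreover have "\<not> (t = Suc t' mod m \<and> t' = Suc t mod m)"
  proof
    assume "t = Suc t' mod m \<and> t' = Suc t mod m"
    then have "Suc (Suc t) mod m = t"
      by (metis mod_Suc_eq)
    then have "(t + 2) mod m = t mod m"
      using \<open>t < m\<close> by simp
    then have "m dvd 2"
      using mod_eq_dvd_iff_nat[of t "t + 2" m] by simp
    with \<open>3 \<le> m\<close> show False
      by (auto dest: dvd_imp_le)
  qed
  ultimately show "t = t' \<and> a = a' \<and> b = b'"
    by blast
qed simp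

lemma lex_edges_cycle_graph:
  "lex_edges (cycle_graph_edges m) n = {lex_cycle_edge m t a b | t a b. t < m \<and> a < n \<and> b < n}"
proof (intro equalityI subsetI)
  fix e assume "e \<in> lex_edges (cycle_graph_edges m) n"
  then obtain u w i j t where e: "e = {(u, i), (w, j)}" "i < n" "j < n" "t < m"
    and "{u, w} = {t, Suc t mod m}"
    unfolding lex_edges_def cycle_graph_edges_def by auto
  then have "e = lex_cycle_edge m t i j \<or> e = lex_cycle_edge m t j i"
    unfolding lex_cycle_edge_def by (auto simp: doubleton_eq_iff insert_commute)
  with e show "e \<in> {lex_cycle_edge m t a b | t a b. t < m \<and> a < n \<and> b < n}"
    by blast
next
  fix e assume "e \<in> {lex_cycle_edge m t a b | t a b. t < m \<and> a < n \<and> b < n}"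
  then obtain t a b where "e = lex_cycle_edge m t a b" "t < m" "a < n" "b < n"
    by blast
  moreover have "{t, Suc t mod m} \<in> cycle_graph_edges m"
    using \<open>t < m\<close> unfolding cycle_graph_edges_def by auto
  ultimately show "e \<in> lex_edges (cycle_graph_edges m) n"
    unfolding lex_edges_def lex_cycle_edge_def by blast
qed

lemma lex_vertices_cycle_graph:
  "lex_vertices (cycle_graph_vertices m) n = {(w, i). w < m \<and> i < n}"
  unfolding lex_vertices_def cycle_graph_vertices_def by auto

definition lex_cycle_edges_where ::
    "nat \<Rightarrow> nat \<Rightarrow> (nat \<Rightarrow> nat \<Rightarrow> nat \<Rightarrow> bool) \<Rightarrow> (nat \<times> nat) set set" where
  "lex_cycle_edges_where m n R =
     {lex_cycle_edge m t a b | t a b. t < m \<and> a < n \<and> b < n \<and> R t a b}"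

lemma lex_cycle_edge_in_lex_cycle_edges_where:
  "t < m \<Longrightarrow> a < n \<Longrightarrow> b < n \<Longrightarrow> R t a b \<Longrightarrow> lex_cycle_edge m t a b \<in> lex_cycle_edges_where m n R"
  unfolding lex_cycle_edges_where_def by blast

lemma lex_cycle_edges_where_subset:
  "lex_cycle_edges_where m n R \<subseteq> lex_edges (cycle_graph_edges m) n"
  unfolding lex_cycle_edges_where_def lex_edges_cycle_graph by blast

lemma lex_cycle_edges_where_cong:
  assumes "\<And>t a b. t < m \<Longrightarrow> a < n \<Longrightarrow> b < n \<Longrightarrow> R t a b \<longleftrightarrow> S t a b"
  shows "lex_cycle_edges_where m n R = lex_cycle_edges_where m n S"
  unfolding lex_cycle_edges_where_def using assms by blast

lemma lex_cycle_edges_where_disjoint: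
  assumes "3 \<le> m" and "\<And>t a b. t < m \<Longrightarrow> a < n \<Longrightarrow> b < n \<Longrightarrow> R t a b \<Longrightarrow> \<not> S t a b"
  shows "lex_cycle_edges_where m n R \<inter> lex_cycle_edges_where m n S = {}"
  unfolding lex_cycle_edges_where_def
  using assms(2) by (auto simp: lex_cycle_edge_eq_iff[OF assms(1)])

lemma is_Ck_factorI:
  assumes "3 \<le> k" "F \<subseteq> E"
    and "\<forall>c\<in>Cs. length c = k \<and> distinct c"
    and "pairwise (\<lambda>c d. set c \<inter> set d = {}) Cs"
    and "(\<Union>c\<in>Cs. set c) = V"
    and "F = (\<Union>c\<in>Cs. list_cycle_edges c)"
  shows "is_Ck_factor k V E F"
  using assms unfolding is_Ck_factor_def pairwise_def by blast

section \<open>C_m-factors from matchings between consecutive layers\<close>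

definition transversal :: "nat \<Rightarrow> (nat \<Rightarrow> nat) \<Rightarrow> (nat \<times> nat) list" where
  "transversal m g = map (\<lambda>t. (t, g t)) [0..<m]"

lemma set_transversal: "set (transversal m g) = {(t, g t) | t. t < m}"
  unfolding transversal_def by auto

lemma distinct_transversal: "length (transversal m g) = m \<and> distinct (transversal m g)"
  unfolding transversal_def by (simp add: distinct_map inj_on_def)

lemma list_cycle_edges_transversal:
  "list_cycle_edges (transversal m g) = {lex_cycle_edge m t (g t) (g (Suc t mod m)) | t. t < m}"
proof -
  have "list_cycle_edges (transversal m g) =
      {{transversal m g ! t, transversal m g ! (Suc t mod m)} | t. t < m}"
    unfolding list_cycle_edges_def transversal_def by simp
  also have "\<dots> = {lex_cycle_edge m t (g t) (g (Suc t mod m)) | t. t < m}"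
    unfolding setcompr_eq_image lex_cycle_edge_def
    by (rule image_cong) (simp_all add: transversal_def)
  finally show ?thesis .
qed

text \<open>P t i is the copy of vertex t on the i-th cycle, and f t is the matching from layer t
  to layer t + 1.\<close>

lemma is_Cm_factor_lex_cycle_edges_where:
  fixes P f :: "nat \<Rightarrow> nat \<Rightarrow> nat"
  assumes m: "3 \<le> m"
    and bij: "\<And>t. t < m \<Longrightarrow> bij_betw (P t) {..<n} {..<n}"
    and step: "\<And>t i. t < m \<Longrightarrow> i < n \<Longrightarrow> P (Suc t mod m) i = f t (P t i)"
  shows "is_Ck_factor m (lex_vertices (cycle_graph_vertices m) n) (lex_edges (cycle_graph_edges m) n)
           (lex_cycle_edges_where m n (\<lambda>t a b. b = f t a))"
proof -
  define C where "C i = transversal m (\<lambda>t. P t i)" for i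
  have P_less: "P t i < n" if "t < m" "i < n" for t i
    using bij[OF that(1)] that(2) by (auto simp: bij_betw_def)
  have P_inj: "i = j" if "t < m" "i < n" "j < n" "P t i = P t j" for t i j
    using bij[OF that(1)] that(2-) by (auto simp: bij_betw_def inj_on_def)
  have P_surj: "\<exists>i<n. P t i = a" if "t < m" "a < n" for t a
    using bij[OF that(1)] that(2) unfolding bij_betw_def by (metis imageE lessThan_iff)
  have edges_C: "list_cycle_edges (C i) = {lex_cycle_edge m t (P t i) (P (Suc t mod m) i) | t. t < m}" for i
    unfolding C_def list_cycle_edges_transversal by simp
  have "\<forall>c\<in>C ` {..<n}. length c = m \<and> distinct c"
    unfolding C_def using distinct_transversal by blast
  moreover have "pairwise (\<lambda>c d. set c \<inter> set d = {}) (C ` {..<n})"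
  proof (rule pairwise_imageI)
    fix i j assume "i \<in> {..<n}" "j \<in> {..<n}" "i \<noteq> j"
    with P_inj show "set (C i) \<inter> set (C j) = {}"
      by (auto simp: C_def set_transversal)
  qed
  moreover have "(\<Union>c\<in>C ` {..<n}. set c) = lex_vertices (cycle_graph_vertices m) n"
  proof (intro equalityI subsetI)
    fix x assume "x \<in> (\<Union>c\<in>C ` {..<n}. set c)"
    with P_less show "x \<in> lex_vertices (cycle_graph_vertices m) n"
      unfolding lex_vertices_cycle_graph by (auto simp: C_def set_transversal)
  next
    fix x assume "x \<in> lex_vertices (cycle_graph_vertices m) n"
    then obtain t a where x: "x = (t, a)" "t < m" "a < n"
      unfolding lex_vertices_cycle_graph by auto
    with P_surj obtain i where "i < n" "P t i = a"
      by blast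
    with x have "x \<in> set (C i)"
      by (auto simp: C_def set_transversal)
    with \<open>i < n\<close> show "x \<in> (\<Union>c\<in>C ` {..<n}. set c)"
      by blast
  qed
  moreover have "lex_cycle_edges_where m n (\<lambda>t a b. b = f t a) = (\<Union>c\<in>C ` {..<n}. list_cycle_edges c)"
  proof (intro equalityI subsetI)
    fix e assume "e \<in> lex_cycle_edges_where m n (\<lambda>t a b. b = f t a)"
    then obtain t a where e: "e = lex_cycle_edge m t a (f t a)" "t < m" "a < n"
      unfolding lex_cycle_edges_where_def by blast
    with P_surj obtain i where "i < n" "P t i = a"
      by blast
    with e step have "e = lex_cycle_edge m t (P t i) (P (Suc t mod m) i)"
      by simp
    with \<open>t < m\<close> have "e \<in> list_cycle_edges (C i)"
      unfolding edges_C by blast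
    with \<open>i < n\<close> show "e \<in> (\<Union>c\<in>C ` {..<n}. list_cycle_edges c)"
      by blast
  next
    fix e assume "e \<in> (\<Union>c\<in>C ` {..<n}. list_cycle_edges c)"
    then obtain i where "i < n" "e \<in> list_cycle_edges (C i)"
      by blast
    then obtain t where "t < m" and e: "e = lex_cycle_edge m t (P t i) (P (Suc t mod m) i)"
      unfolding edges_C by blast
    moreover have "P t i < n" "P (Suc t mod m) i < n"
      using P_less[of _ i] \<open>t < m\<close> \<open>i < n\<close> by simp_all
    moreover have "P (Suc t mod m) i = f t (P t i)"
      using step \<open>t < m\<close> \<open>i < n\<close> by simp
    ultimately show "e \<in> lex_cycle_edges_where m n (\<lambda>t a b. b = f t a)"
      by (simp add: lex_cycle_edge_in_lex_cycle_edges_where)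
  qed
  ultimately show ?thesis
    using m lex_cycle_edges_where_subset by (intro is_Ck_factorI)
qed

text \<open>For odd m the involution \<sigma> is applied m - 2 times, an odd number of times, so the
  composite around the cycle is \<beta> \<circ> \<alpha> \<circ> \<sigma>.\<close>

lemma is_Cm_factor_alternating:
  fixes \<sigma> \<alpha> \<beta> :: "nat \<Rightarrow> nat"
  assumes m: "3 \<le> m"
    and \<sigma>: "bij_betw \<sigma> {..<n} {..<n}" "\<And>i. i < n \<Longrightarrow> \<sigma> (\<sigma> i) = i"
    and \<alpha>: "bij_betw \<alpha> {..<n} {..<n}"
    and \<beta>: "\<And>i. i < n \<Longrightarrow> \<beta> (\<alpha> (\<sigma> i)) = i"
  shows "is_Ck_factor m (lex_vertices (cycle_graph_vertices m) n) (lex_edges (cycle_graph_edges m) n)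
           (lex_cycle_edges_where m n (\<lambda>t a b.
              b = (if odd m \<and> t = m - 2 then \<alpha> a else if odd m \<and> t = m - 1 then \<beta> a else \<sigma> a)))"
proof (rule is_Cm_factor_lex_cycle_edges_where[OF m])
  define P where "P t = (if odd m \<and> t = m - 1 then \<alpha> \<circ> \<sigma> else if even t then id else \<sigma>)" for t
  show "bij_betw (P t) {..<n} {..<n}" for t
    unfolding P_def using bij_betw_trans[OF \<sigma>(1) \<alpha>] \<sigma>(1) by simp
  show "P (Suc t mod m) i = (if odd m \<and> t = m - 2 then \<alpha> (P t i)
      else if odd m \<and> t = m - 1 then \<beta> (P t i) else \<sigma> (P t i))"
    if "t < m" "i < n" for t i
  proof (cases "t = m - 1")
    case True
    then have "Suc t mod m = 0" "t \<noteq> m - 2"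
      using m by auto
    with True m \<sigma>(2) \<beta> \<open>i < n\<close> show ?thesis
      unfolding P_def by (cases "even m") auto
  next
    case False
    then have "Suc t mod m = Suc t" "Suc t = m - 1 \<longleftrightarrow> t = m - 2"
      using m \<open>t < m\<close> by auto
    with False m \<sigma>(2) \<open>i < n\<close> show ?thesis
      unfolding P_def by (cases "odd m \<and> t = m - 2") auto
  qed
qed

section \<open>C_4-factors made of 4-cycles between consecutive layers\<close>

lemma list_cycle_edges_4:
  "list_cycle_edges [x, y, x', y'] = {{x, y}, {y, x'}, {x', y'}, {y', x}}"
proof -
  have indices: "{i. i < length [x, y, x', y']} = {0, 1, 2, 3}"
    by auto
  show ?thesis
    unfolding list_cycle_edges_def setcompr_eq_image indices by simp
qed

definition square :: "nat \<Rightarrow> nat \<Rightarrow> nat \<Rightarrow> nat \<Rightarrow> nat \<Rightarrow> nat \<Rightarrow> (nat \<times> nat) list" where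
  "square m t a a' b b' = [(t, a), (Suc t mod m, b), (t, a'), (Suc t mod m, b')]"

lemma set_square:
  "set (square m t a a' b b') = {(t, a), (t, a'), (Suc t mod m, b), (Suc t mod m, b')}"
  unfolding square_def by auto

lemma distinct_square:
  "2 \<le> m \<Longrightarrow> t < m \<Longrightarrow> a \<noteq> a' \<Longrightarrow> b \<noteq> b' \<Longrightarrow> distinct (square m t a a' b b')"
  unfolding square_def by (auto simp: mod_Suc)

lemma set_square_disjoint:
  assumes "u < m" "v < m" "u \<noteq> v" "distinct [a, a', b, b']"
  shows "set (square m u a a' b b') \<inter> set (square m v a a' b b') = {}"
proof -
  have "Suc u mod m \<noteq> Suc v mod m"
    using assms(1-3) Suc_mod_inj by blast
  with assms(3,4) show ?thesis
    unfolding set_square by auto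
qed

lemma list_cycle_edges_square:
  "list_cycle_edges (square m t a a' b b') =
     {lex_cycle_edge m t a b, lex_cycle_edge m t a' b, lex_cycle_edge m t a' b', lex_cycle_edge m t a b'}"
  unfolding square_def list_cycle_edges_4 lex_cycle_edge_def
  by (simp add: insert_commute[of "(Suc t mod m, b)"] insert_commute[of "(Suc t mod m, b')"])

lemma is_C4_factor_squares:
  assumes m: "2 \<le> m"
    and lr: "distinct [l, l', r, r']" "{l, l', r, r'} = {..<4}"
  shows "is_Ck_factor 4 (lex_vertices (cycle_graph_vertices m) 4) (lex_edges (cycle_graph_edges m) 4)
           (lex_cycle_edges_where m 4 (\<lambda>t a b. a \<in> {l, l'} \<and> b \<in> {r, r'}))"
    (is "is_Ck_factor 4 ?V _ (lex_cycle_edges_where m 4 ?R)")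
proof -
  define Cs where "Cs = (\<lambda>t. square m t l l' r r') ` {..<m}"
  have lt4: "l < 4" "l' < 4" "r < 4" "r' < 4"
    using lr(2) by auto
  have "distinct (square m t l l' r r')" if "t < m" for t
    using that m lr(1) by (intro distinct_square) auto
  then have "\<forall>c\<in>Cs. length c = 4 \<and> distinct c"
    unfolding Cs_def by (simp add: square_def)
  moreover have "pairwise (\<lambda>c d. set c \<inter> set d = {}) Cs"
    unfolding Cs_def using lr(1) by (intro pairwise_imageI set_square_disjoint) auto
  moreover have "(\<Union>c\<in>Cs. set c) = ?V"
  proof (intro equalityI subsetI)
    fix x assume "x \<in> (\<Union>c\<in>Cs. set c)"
    with m lt4 show "x \<in> ?V"
      unfolding Cs_def lex_vertices_cycle_graph by (auto simp: set_square)
  next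
    fix x assume "x \<in> ?V"
    then obtain w i where x: "x = (w, i)" "w < m" "i \<in> {l, l', r, r'}"
      unfolding lex_vertices_cycle_graph lr(2) by auto
    obtain u where u: "u < m" "Suc u mod m = w"
      using Suc_mod_surj[OF x(2)] .
    with x have "x \<in> set (square m w l l' r r') \<or> x \<in> set (square m u l l' r r')"
      unfolding set_square by auto
    with x(2) u(1) show "x \<in> (\<Union>c\<in>Cs. set c)"
      unfolding Cs_def by blast
  qed
  moreover have "lex_cycle_edges_where m 4 ?R = (\<Union>c\<in>Cs. list_cycle_edges c)"
  proof (intro equalityI subsetI)
    fix e assume "e \<in> lex_cycle_edges_where m 4 ?R"
    then obtain t a b where "t < m" "e = lex_cycle_edge m t a b" "a \<in> {l, l'}" "b \<in> {r, r'}"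
      unfolding lex_cycle_edges_where_def by blast
    then have "e \<in> list_cycle_edges (square m t l l' r r')"
      unfolding list_cycle_edges_square by blast
    with \<open>t < m\<close> show "e \<in> (\<Union>c\<in>Cs. list_cycle_edges c)"
      unfolding Cs_def by blast
  next
    fix e assume "e \<in> (\<Union>c\<in>Cs. list_cycle_edges c)"
    then obtain t where "t < m" "e \<in> list_cycle_edges (square m t l l' r r')"
      unfolding Cs_def by blast
    with lt4 show "e \<in> lex_cycle_edges_where m 4 ?R"
      unfolding list_cycle_edges_square lex_cycle_edges_where_def by blast
  qed
  ultimately show ?thesis
    by (intro is_Ck_factorI[OF _ lex_cycle_edges_where_subset]) simp_all
qed

text \<open>For m = s + 2 the vertex s + 1 is adjacent to 0, so this is a 4-cycle of C_m[4] through
  two copies of the last vertex.\<close>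

definition bridge :: "nat \<Rightarrow> nat \<Rightarrow> nat \<Rightarrow> nat \<Rightarrow> nat \<Rightarrow> (nat \<times> nat) list" where
  "bridge s a b b' c = [(s, a), (Suc s, b), (0, c), (Suc s, b')]"

lemma list_cycle_edges_bridge:
  "list_cycle_edges (bridge s a b b' c) = {lex_cycle_edge (Suc (Suc s)) s a b,
     lex_cycle_edge (Suc (Suc s)) (Suc s) b c, lex_cycle_edge (Suc (Suc s)) (Suc s) b' c,
     lex_cycle_edge (Suc (Suc s)) s a b'}"
  unfolding bridge_def list_cycle_edges_4 lex_cycle_edge_def by (simp add: insert_commute)

text \<open>The squares of the last two layer gaps of C_m[4], m = s + 2, are replaced by the two
  bridges through layer s + 1. The parameter s = m - 2 avoids truncated subtraction.\<close>

locale twisted_squares =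
  fixes m s l l' r r' p p' q q' :: nat
  assumes m_eq: "m = Suc (Suc s)" and s_pos: "0 < s"
    and lr: "distinct [l, l', r, r']" "{l, l', r, r'} = {..<4}"
    and pq: "distinct [p, p', q, q']" "{p, p', q, q'} = {..<4}"
begin

definition rel :: "nat \<Rightarrow> nat \<Rightarrow> nat \<Rightarrow> bool" where
  "rel t a b \<longleftrightarrow>
     t < s \<and> a \<in> {l, l'} \<and> b \<in> {r, r'} \<or>
     t = s \<and> (a = l \<and> b \<in> {p, p'} \<or> a = l' \<and> b \<in> {q, q'}) \<or>
     t = Suc s \<and> (a \<in> {p, p'} \<and> b = r \<or> a \<in> {q, q'} \<and> b = r')"

definition cycles :: "(nat \<times> nat) list set" where
  "cycles = {bridge s l p p' r, bridge s l' q q' r'} \<union> (\<lambda>t. square m t l l' r r') ` {..<s}"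

lemma less_m: "s < m" "Suc s < m" "0 < m"
  using m_eq by simp_all

lemma params_less_4: "l < 4" "l' < 4" "r < 4" "r' < 4" "p < 4" "p' < 4" "q < 4" "q' < 4"
  using lr(2) pq(2) by auto

lemma list_cycle_edges_bridge_m:
  "list_cycle_edges (bridge s a b b' c) =
     {lex_cycle_edge m s a b, lex_cycle_edge m (Suc s) b c, lex_cycle_edge m (Suc s) b' c, lex_cycle_edge m s a b'}"
  unfolding list_cycle_edges_bridge m_eq ..

lemma set_square_less:
  "t < s \<Longrightarrow> set (square m t l l' r r') = {(t, l), (t, l'), (Suc t, r), (Suc t, r')}"
  unfolding set_square m_eq by simp

lemma cycles_distinct: "\<forall>c\<in>cycles. length c = 4 \<and> distinct c"
proof -
  have "distinct (square m t l l' r r')" if "t < s" for t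
    using that lr(1) less_m by (intro distinct_square) auto
  with lr(1) pq(1) s_pos show ?thesis
    unfolding cycles_def by (auto simp: square_def bridge_def)
qed

lemma cycles_disjoint: "pairwise (\<lambda>c d. set c \<inter> set d = {}) cycles"
proof -
  have "set (bridge s l p p' r) \<inter> set (square m u l l' r r') = {}"
    "set (bridge s l' q q' r') \<inter> set (square m u l l' r r') = {}" if "u < s" for u
    using that lr(1) by (auto simp: set_square_less bridge_def)
  moreover have "set (bridge s l p p' r) \<inter> set (bridge s l' q q' r') = {}"
    using lr(1) pq(1) by (auto simp: bridge_def)
  moreover have "pairwise (\<lambda>c d. set c \<inter> set d = {}) ((\<lambda>t. square m t l l' r r') ` {..<s})"
    using lr(1) less_m by (intro pairwise_imageI set_square_disjoint) auto
  ultimately show ?thesis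
    unfolding cycles_def by (auto simp: pairwise_insert Int_commute)
qed

lemma Union_set_cycles: "(\<Union>c\<in>cycles. set c) = lex_vertices (cycle_graph_vertices m) 4"
proof (intro equalityI subsetI)
  fix x assume "x \<in> (\<Union>c\<in>cycles. set c)"
  with less_m params_less_4 show "x \<in> lex_vertices (cycle_graph_vertices m) 4"
    unfolding cycles_def lex_vertices_cycle_graph by (auto simp: set_square_less bridge_def)
next
  fix x assume "x \<in> lex_vertices (cycle_graph_vertices m) 4"
  then obtain w i where x: "x = (w, i)" "w \<le> Suc s" "i \<in> {l, l', r, r'}" "i \<in> {p, p', q, q'}"
    unfolding lex_vertices_cycle_graph lr(2) pq(2) m_eq by auto
  consider "w = Suc s" | "w = s" "i \<in> {l, l'}" | "w < s" "i \<in> {l, l'}"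
    | "w = 0" "i \<in> {r, r'}" | "0 < w" "w \<le> s" "i \<in> {r, r'}"
    using x(2,3) by fastforce
  then have "x \<in> set (bridge s l p p' r) \<union> set (bridge s l' q q' r') \<or>
      (\<exists>t<s. x \<in> set (square m t l l' r r'))"
  proof cases
    case 1
    with x(1,4) show ?thesis
      by (auto simp: bridge_def)
  next
    case 2
    with x(1) show ?thesis
      by (auto simp: bridge_def)
  next
    case 3
    with x(1) have "x \<in> set (square m w l l' r r')"
      by (simp add: set_square_less)
    with 3 show ?thesis
      by blast
  next
    case 4
    with x(1) show ?thesis
      by (auto simp: bridge_def)
  next
    case 5
    then have "w - 1 < s" "x \<in> set (square m (w - 1) l l' r r')"
      using x(1) by (auto simp: set_square_less)
    then show ?thesis
      by blast
  qed
  then show "x \<in> (\<Union>c\<in>cycles. set c)"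
    unfolding cycles_def by blast
qed

lemma lex_cycle_edges_where_rel:
  "lex_cycle_edges_where m 4 rel = (\<Union>c\<in>cycles. list_cycle_edges c)"
proof (intro equalityI subsetI)
  fix e assume "e \<in> lex_cycle_edges_where m 4 rel"
  then obtain t a b where e: "e = lex_cycle_edge m t a b" "t < m" "rel t a b"
    unfolding lex_cycle_edges_where_def by auto
  consider "t < s" | "t = s" | "t = Suc s"
    using e(2) m_eq by linarith
  then have "e \<in> list_cycle_edges (bridge s l p p' r) \<union> list_cycle_edges (bridge s l' q q' r') \<or>
      (\<exists>t<s. e \<in> list_cycle_edges (square m t l l' r r'))"
  proof cases
    case 1
    with e(3) have "a \<in> {l, l'}" "b \<in> {r, r'}"
      unfolding rel_def by auto
    with 1 e(1) show ?thesis
      unfolding list_cycle_edges_square by blast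
  next
    case 2
    with e(3) have "a = l \<and> b \<in> {p, p'} \<or> a = l' \<and> b \<in> {q, q'}"
      unfolding rel_def by auto
    with 2 e(1) show ?thesis
      unfolding list_cycle_edges_bridge_m by blast
  next
    case 3
    with e(3) have "a \<in> {p, p'} \<and> b = r \<or> a \<in> {q, q'} \<and> b = r'"
      unfolding rel_def by auto
    with 3 e(1) show ?thesis
      unfolding list_cycle_edges_bridge_m by blast
  qed
  then show "e \<in> (\<Union>c\<in>cycles. list_cycle_edges c)"
    unfolding cycles_def by blast
next
  fix e assume "e \<in> (\<Union>c\<in>cycles. list_cycle_edges c)"
  then consider t where "t < s" "e \<in> list_cycle_edges (square m t l l' r r')"
    | "e \<in> list_cycle_edges (bridge s l p p' r)" | "e \<in> list_cycle_edges (bridge s l' q q' r')"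
    unfolding cycles_def by auto
  then show "e \<in> lex_cycle_edges_where m 4 rel"
  proof cases
    case 1
    with less_m params_less_4 show ?thesis
      unfolding list_cycle_edges_square
      by (auto intro!: lex_cycle_edge_in_lex_cycle_edges_where) (auto simp: rel_def)
  next
    case 2
    with less_m params_less_4 show ?thesis
      unfolding list_cycle_edges_bridge_m
      by (auto intro!: lex_cycle_edge_in_lex_cycle_edges_where) (auto simp: rel_def)
  next
    case 3
    with less_m params_less_4 show ?thesis
      unfolding list_cycle_edges_bridge_m
      by (auto intro!: lex_cycle_edge_in_lex_cycle_edges_where) (auto simp: rel_def)
  qed
qed

lemma is_C4_factor:
  "is_Ck_factor 4 (lex_vertices (cycle_graph_vertices m) 4) (lex_edges (cycle_graph_edges m) 4)
     (lex_cycle_edges_where m 4 rel)"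
  by (rule is_Ck_factorI[OF _ lex_cycle_edges_where_subset cycles_distinct cycles_disjoint
        Union_set_cycles lex_cycle_edges_where_rel]) simp

end

lemma is_C4_factor_squares_twisted:
  assumes m: "3 \<le> m"
    and lr: "distinct [l, l', r, r']" "{l, l', r, r'} = {..<4}"
    and pq: "distinct [p, p', q, q']" "{p, p', q, q'} = {..<4}"
  shows "is_Ck_factor 4 (lex_vertices (cycle_graph_vertices m) 4) (lex_edges (cycle_graph_edges m) 4)
           (lex_cycle_edges_where m 4 (\<lambda>t a b.
              t < m - 2 \<and> a \<in> {l, l'} \<and> b \<in> {r, r'} \<or>
              t = m - 2 \<and> (a = l \<and> b \<in> {p, p'} \<or> a = l' \<and> b \<in> {q, q'}) \<or>
              t = m - 1 \<and> (a \<in> {p, p'} \<and> b = r \<or> a \<in> {q, q'} \<and> b = r')))"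
proof -
  have s: "m = Suc (Suc (m - 2))" "m - 1 = Suc (m - 2)" "0 < m - 2"
    using m by arith+
  interpret twisted_squares m "m - 2" l l' r r' p p' q q'
    using s(1,3) lr pq by unfold_locales
  show ?thesis
    using is_C4_factor unfolding rel_def s(2) .
qed

section \<open>The colouring\<close>

text \<open>Entry (a, b) of a table is the colour of the edge between copy a of vertex t and copy b of
  vertex t + 1; for odd m the gaps starting at the vertices m - 2 and m - 1 use their own tables.\<close>

definition colour_table :: "nat list list" where
  "colour_table = [[2, 0, 0, 3], [1, 3, 2, 1], [1, 2, 3, 1], [3, 0, 0, 2]]"

definition colour_table_penult :: "nat list list" where
  "colour_table_penult = [[2, 0, 3, 0], [3, 1, 1, 2], [1, 3, 2, 1], [0, 2, 0, 3]]"

definition colour_table_last :: "nat list list" where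
  "colour_table_last = [[2, 3, 0, 1], [1, 0, 3, 2], [1, 2, 0, 3], [3, 0, 2, 1]]"

definition colour :: "nat \<Rightarrow> nat \<Rightarrow> nat \<Rightarrow> nat \<Rightarrow> nat" where
  "colour m t a b =
     (if odd m \<and> t = m - 2 then colour_table_penult
      else if odd m \<and> t = m - 1 then colour_table_last else colour_table) ! a ! b"

definition colour_class :: "nat \<Rightarrow> nat \<Rightarrow> (nat \<times> nat) set set" where
  "colour_class m k = lex_cycle_edges_where m 4 (\<lambda>t a b. colour m t a b = k)"

lemma less_4_iff: "(a::nat) < 4 \<longleftrightarrow> a = 0 \<or> a = 1 \<or> a = 2 \<or> a = 3"
  by auto

lemma lessThan_4: "{..<4::nat} = {0, 1, 2, 3}"
  by auto

lemma colour_table_eq_iff: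
  assumes "a < 4" "b < 4"
  shows "colour_table ! a ! b = 0 \<longleftrightarrow> a \<in> {0, 3} \<and> b \<in> {1, 2}"
    and "colour_table ! a ! b = 1 \<longleftrightarrow> a \<in> {1, 2} \<and> b \<in> {0, 3}"
    and "colour_table ! a ! b = 2 \<longleftrightarrow> b = [0, 2, 1, 3] ! a"
    and "colour_table ! a ! b = 3 \<longleftrightarrow> b = [3, 1, 2, 0] ! a"
  using assms unfolding less_4_iff colour_table_def by (elim disjE; simp)+

lemma colour_table_penult_eq_iff:
  assumes "a < 4" "b < 4"
  shows "colour_table_penult ! a ! b = 0 \<longleftrightarrow> a = 0 \<and> b \<in> {1, 3} \<or> a = 3 \<and> b \<in> {0, 2}"
    and "colour_table_penult ! a ! b = 1 \<longleftrightarrow> a = 1 \<and> b \<in> {1, 2} \<or> a = 2 \<and> b \<in> {0, 3}"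
    and "colour_table_penult ! a ! b = 2 \<longleftrightarrow> b = [0, 3, 2, 1] ! a"
    and "colour_table_penult ! a ! b = 3 \<longleftrightarrow> b = [2, 0, 1, 3] ! a"
  using assms unfolding less_4_iff colour_table_penult_def by (elim disjE; simp)+

lemma colour_table_last_eq_iff:
  assumes "a < 4" "b < 4"
  shows "colour_table_last ! a ! b = 0 \<longleftrightarrow> a \<in> {1, 3} \<and> b = 1 \<or> a \<in> {0, 2} \<and> b = 2"
    and "colour_table_last ! a ! b = 1 \<longleftrightarrow> a \<in> {1, 2} \<and> b = 0 \<or> a \<in> {0, 3} \<and> b = 3"
    and "colour_table_last ! a ! b = 2 \<longleftrightarrow> b = [0, 3, 1, 2] ! a"
    and "colour_table_last ! a ! b = 3 \<longleftrightarrow> b = [1, 2, 3, 0] ! a"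
  using assms unfolding less_4_iff colour_table_last_def by (elim disjE; simp)+

lemma colour_less_4: "a < 4 \<Longrightarrow> b < 4 \<Longrightarrow> colour m t a b < 4"
  unfolding less_4_iff colour_def colour_table_def colour_table_penult_def colour_table_last_def
  by (elim disjE; simp)

lemma colour_classes_cover:
  "colour_class m 0 \<union> colour_class m 1 \<union> colour_class m 2 \<union> colour_class m 3 =
     lex_edges (cycle_graph_edges m) 4"
proof -
  have "colour m t a b \<in> {0, 1, 2, 3}" if "a < 4" "b < 4" for t a b
    using colour_less_4[OF that] unfolding less_4_iff by blast
  then show ?thesis
    unfolding colour_class_def lex_cycle_edges_where_def lex_edges_cycle_graph by blast
qed

lemma colour_classes_disjoint:
  "3 \<le> m \<Longrightarrow> k \<noteq> k' \<Longrightarrow> colour_class m k \<inter> colour_class m k' = {}"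
  unfolding colour_class_def by (rule lex_cycle_edges_where_disjoint) auto

lemma colour_even: "even m \<Longrightarrow> colour m t a b = colour_table ! a ! b"
  by (simp add: colour_def)

lemma colour_odd:
  assumes "odd m" "3 \<le> m"
  shows "t < m - 2 \<Longrightarrow> colour m t a b = colour_table ! a ! b"
    and "colour m (m - 2) a b = colour_table_penult ! a ! b"
    and "colour m (m - 1) a b = colour_table_last ! a ! b"
  using assms by (auto simp: colour_def)

lemma colour_class_odd_cong:
  assumes "odd m" "3 \<le> m"
    and "\<And>t a b. t < m - 2 \<Longrightarrow> a < 4 \<Longrightarrow> b < 4 \<Longrightarrow> colour_table ! a ! b = k \<longleftrightarrow> R t a b"
    and "\<And>a b. a < 4 \<Longrightarrow> b < 4 \<Longrightarrow> colour_table_penult ! a ! b = k \<longleftrightarrow> R (m - 2) a b"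
    and "\<And>a b. a < 4 \<Longrightarrow> b < 4 \<Longrightarrow> colour_table_last ! a ! b = k \<longleftrightarrow> R (m - 1) a b"
  shows "colour_class m k = lex_cycle_edges_where m 4 R"
  unfolding colour_class_def
proof (rule lex_cycle_edges_where_cong)
  fix t a b :: nat assume "t < m" "a < 4" "b < 4"
  then consider "t < m - 2" | "t = m - 2" | "t = m - 1"
    by linarith
  then show "colour m t a b = k \<longleftrightarrow> R t a b"
    by cases (use assms \<open>a < 4\<close> \<open>b < 4\<close> colour_odd in auto)
qed

lemma is_C4_factor_colour_class_0:
  assumes m: "3 \<le> m"
  shows "is_Ck_factor 4 (lex_vertices (cycle_graph_vertices m) 4) (lex_edges (cycle_graph_edges m) 4)
           (colour_class m 0)"
proof (cases "even m")
  case True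
  then have "colour_class m 0 = lex_cycle_edges_where m 4 (\<lambda>t a b. a \<in> {0, 3} \<and> b \<in> {1, 2})"
    unfolding colour_class_def
    by (intro lex_cycle_edges_where_cong) (simp add: colour_even colour_table_eq_iff)
  then show ?thesis
    using is_C4_factor_squares[of m 0 3 1 2] m by (simp add: lessThan_4 insert_commute)
next
  case False
  with m have "colour_class m 0 = lex_cycle_edges_where m 4 (\<lambda>t a b.
      t < m - 2 \<and> a \<in> {0, 3} \<and> b \<in> {1, 2} \<or>
      t = m - 2 \<and> (a = 0 \<and> b \<in> {1, 3} \<or> a = 3 \<and> b \<in> {0, 2}) \<or>
      t = m - 1 \<and> (a \<in> {1, 3} \<and> b = 1 \<or> a \<in> {0, 2} \<and> b = 2))"
    by (intro colour_class_odd_cong)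
      (auto simp: colour_table_eq_iff colour_table_penult_eq_iff colour_table_last_eq_iff)
  then show ?thesis
    using is_C4_factor_squares_twisted[of m 0 3 1 2 1 3 0 2] m
    by (simp add: lessThan_4 insert_commute)
qed

text \<open>Simp turns the colour 1 into Suc 0, so the table facts are supplied as premises.\<close>

lemma is_C4_factor_colour_class_1:
  assumes m: "3 \<le> m"
  shows "is_Ck_factor 4 (lex_vertices (cycle_graph_vertices m) 4) (lex_edges (cycle_graph_edges m) 4)
           (colour_class m 1)"
proof (cases "even m")
  case True
  then have "colour_class m 1 = lex_cycle_edges_where m 4 (\<lambda>t a b. a \<in> {1, 2} \<and> b \<in> {0, 3})"
    unfolding colour_class_def
    by (intro lex_cycle_edges_where_cong) (use colour_table_eq_iff(2) in \<open>auto simp: colour_even\<close>)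
  then show ?thesis
    using is_C4_factor_squares[of m 1 2 0 3] m by (simp add: lessThan_4 insert_commute)
next
  case False
  with m have "colour_class m 1 = lex_cycle_edges_where m 4 (\<lambda>t a b.
      t < m - 2 \<and> a \<in> {1, 2} \<and> b \<in> {0, 3} \<or>
      t = m - 2 \<and> (a = 1 \<and> b \<in> {1, 2} \<or> a = 2 \<and> b \<in> {0, 3}) \<or>
      t = m - 1 \<and> (a \<in> {1, 2} \<and> b = 0 \<or> a \<in> {0, 3} \<and> b = 3))"
    by (intro colour_class_odd_cong)
      (use colour_table_eq_iff(2) colour_table_penult_eq_iff(2) colour_table_last_eq_iff(2) in auto)
  then show ?thesis
    using is_C4_factor_squares_twisted[of m 1 2 0 3 1 2 0 3] m
    by (simp add: lessThan_4 insert_commute)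
qed

lemma is_Cm_factor_colour_class_2:
  assumes m: "3 \<le> m"
  shows "is_Ck_factor m (lex_vertices (cycle_graph_vertices m) 4) (lex_edges (cycle_graph_edges m) 4)
           (colour_class m 2)"
proof -
  have "colour_class m 2 = lex_cycle_edges_where m 4 (\<lambda>t a b. b =
      (if odd m \<and> t = m - 2 then [0, 3, 2, 1] ! a
       else if odd m \<and> t = m - 1 then [0, 3, 1, 2] ! a else [0, 2, 1, 3] ! a))"
    unfolding colour_class_def colour_def
    by (intro lex_cycle_edges_where_cong)
      (simp add: colour_table_eq_iff colour_table_penult_eq_iff colour_table_last_eq_iff)
  also have "is_Ck_factor m (lex_vertices (cycle_graph_vertices m) 4) (lex_edges (cycle_graph_edges m) 4) \<dots>"
  proof (rule is_Cm_factor_alternating[OF m])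
    show "bij_betw ((!) [0, 2, 1, 3 :: nat]) {..<4} {..<4}"
      and "bij_betw ((!) [0, 3, 2, 1 :: nat]) {..<4} {..<4}"
      by (rule bij_betw_nth; auto)+
    show "[0, 2, 1, 3] ! ([0, 2, 1, 3] ! i) = i"
      and "[0, 3, 1, 2] ! ([0, 3, 2, 1] ! ([0, 2, 1, 3] ! i)) = i" if "i < 4" for i :: nat
      using that unfolding less_4_iff by auto
  qed
  finally show ?thesis .
qed

lemma is_Cm_factor_colour_class_3:
  assumes m: "3 \<le> m"
  shows "is_Ck_factor m (lex_vertices (cycle_graph_vertices m) 4) (lex_edges (cycle_graph_edges m) 4)
           (colour_class m 3)"
proof -
  have "colour_class m 3 = lex_cycle_edges_where m 4 (\<lambda>t a b. b =
      (if odd m \<and> t = m - 2 then [2, 0, 1, 3] ! a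
       else if odd m \<and> t = m - 1 then [1, 2, 3, 0] ! a else [3, 1, 2, 0] ! a))"
    unfolding colour_class_def colour_def
    by (intro lex_cycle_edges_where_cong)
      (simp add: colour_table_eq_iff colour_table_penult_eq_iff colour_table_last_eq_iff)
  also have "is_Ck_factor m (lex_vertices (cycle_graph_vertices m) 4) (lex_edges (cycle_graph_edges m) 4) \<dots>"
  proof (rule is_Cm_factor_alternating[OF m])
    show "bij_betw ((!) [3, 1, 2, 0 :: nat]) {..<4} {..<4}"
      and "bij_betw ((!) [2, 0, 1, 3 :: nat]) {..<4} {..<4}"
      by (rule bij_betw_nth; auto)+
    show "[3, 1, 2, 0] ! ([3, 1, 2, 0] ! i) = i"
      and "[1, 2, 3, 0] ! ([2, 0, 1, 3] ! ([3, 1, 2, 0] ! i)) = i" if "i < 4" for i :: nat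
      using that unfolding less_4_iff by auto
  qed
  finally show ?thesis .
qed

theorem mainTheorem4:
  fixes m :: nat
  assumes "m \<ge> 3"
  shows "\<exists>F1 F2 F3 F4.
    F1 \<union> F2 \<union> F3 \<union> F4 = lex_edges (cycle_graph_edges m) 4 \<and>
    F1 \<inter> F2 = {} \<and> F1 \<inter> F3 = {} \<and> F1 \<inter> F4 = {} \<and>
    F2 \<inter> F3 = {} \<and> F2 \<inter> F4 = {} \<and> F3 \<inter> F4 = {} \<and>
    is_Ck_factor 4 (lex_vertices (cycle_graph_vertices m) 4) (lex_edges (cycle_graph_edges m) 4) F1 \<and>
    is_Ck_factor 4 (lex_vertices (cycle_graph_vertices m) 4) (lex_edges (cycle_graph_edges m) 4) F2 \<and>
    is_Ck_factor m (lex_vertices (cycle_graph_vertices m) 4) (lex_edges (cycle_graph_edges m) 4) F3 \<and>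
    is_Ck_factor m (lex_vertices (cycle_graph_vertices m) 4) (lex_edges (cycle_graph_edges m) 4) F4"
proof (intro exI conjI)
  show "colour_class m 0 \<union> colour_class m 1 \<union> colour_class m 2 \<union> colour_class m 3 =
      lex_edges (cycle_graph_edges m) 4"
    by (rule colour_classes_cover)
  show "colour_class m 0 \<inter> colour_class m 1 = {}" "colour_class m 0 \<inter> colour_class m 2 = {}"
    "colour_class m 0 \<inter> colour_class m 3 = {}" "colour_class m 1 \<inter> colour_class m 2 = {}"
    "colour_class m 1 \<inter> colour_class m 3 = {}" "colour_class m 2 \<inter> colour_class m 3 = {}"
    using colour_classes_disjoint[OF assms] by simp_all
qed (fact is_C4_factor_colour_class_0[OF assms] is_C4_factor_colour_class_1[OF assms]
       is_Cm_factor_colour_class_2[OF assms] is_Cm_factor_colour_class_3[OF assms])+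

end
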